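(* Let $\mathcal{D}$ be a generalised dyadic system, $\nu$ a Radon measure on $\mathbb{R}$ dyadically doubling relative to $\mathcal{D}$, and $\mu = g\,d\nu$ with $g\ge0$, $g\in L^2(\nu)$. Then $$\sum_{I\in\mathcal{D},\ \nu(I)>0}\alpha^2_{\mu,\nu}(I)\frac{\mu(I)^2}{\nu(I)}\le C\|g\|^2_{L^2(\nu)},$$ where $C$ is an absolute constant.
   Context: A generalised dyadic system is a family $\mathcal{D}=\bigcup_{k\ge0}\mathcal{D}_k$ of half-open intervals such that each $\mathcal{D}_k$ is a partition of $\mathbb{R}$ into intervals of length $2^{-k}$, and each $I\in\mathcal{D}_k$ is the union of two intervals of $\mathcal{D}_{k+1}$. $\nu$ is dyadically doubling relative to $\mathcal{D}$ if $\nu(\hat I)\le C\nu(I)$ for every $I\in\mathcal{D}_k$, $k\ge1$, with $\hat I\in\mathcal{D}_{k-1}$ the interval containing $I$. Wasserstein distance: $\mathbb{W}_1(\nu_1,\nu_2) := \sup_\psi |\int\psi\,d\nu_1 - \int\psi\,d\nu_2|$ over all $1$-Lipschitz $\psi\colon\mathbb{R}\to\mathbb{R}$ supported on $[0,1]$. $T_I$ is the increasing affine map from $\overline I$ onto $[0,1]$, $\mu_I := T_{I\sharp}(\mu|_I)/\mu(I)$, $\nu_I := T_{I\sharp}(\nu|_I)/\nu(I)$ (zero if the mass vanishes), $\alpha_{\mu,\nu}(I) := \mathbb{W}_1(\mu_I,\nu_I)$. *)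

theory Defs
  imports "HOL-Analysis.Analysis"
begin

definition gen_dyadic_system :: "(nat \<Rightarrow> real set set) \<Rightarrow> bool" where
  "gen_dyadic_system D \<longleftrightarrow>
     (\<forall>k. (\<forall>I\<in>D k. \<exists>a. I = {a..<a + (1/2)^k}) \<and> (\<forall>x::real. \<exists>!I. I \<in> D k \<and> x \<in> I)) \<and>
     (\<forall>k. \<forall>I\<in>D k. \<exists>I1\<in>D (Suc k). \<exists>I2\<in>D (Suc k). I1 \<noteq> I2 \<and> I = I1 \<union> I2)"

definition radon_measure :: "real measure \<Rightarrow> bool" where
  "radon_measure \<nu> \<longleftrightarrow> sets \<nu> = sets borel \<and> (\<forall>K. compact K \<longrightarrow> emeasure \<nu> K < \<infinity>)"

definition dyadically_doubling :: "(nat \<Rightarrow> real set set) \<Rightarrow> real measure \<Rightarrow> bool" where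
  "dyadically_doubling D \<nu> \<longleftrightarrow>
     (\<exists>C. \<forall>k\<ge>1. \<forall>I\<in>D k. \<forall>J\<in>D (k - 1). I \<subseteq> J \<longrightarrow> measure \<nu> J \<le> C * measure \<nu> I)"

definition T_map :: "real set \<Rightarrow> real \<Rightarrow> real" where
  "T_map I x = (x - Inf I) / (Sup I - Inf I)"

text \<open>Normalised blow-up \<mu>_I = T_I # (\<mu>|_I) / \<mu>(I) (zero measure if \<mu>(I) = 0).\<close>
definition blowup :: "real measure \<Rightarrow> real set \<Rightarrow> real measure" where
  "blowup \<mu> I = (if measure \<mu> I = 0 then null_measure borel
     else scale_measure (ennreal (1 / measure \<mu> I))
            (distr (density \<mu> (indicator I)) borel (T_map I)))"

definition W1 :: "real measure \<Rightarrow> real measure \<Rightarrow> real" where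
  "W1 m1 m2 = Sup {\<bar>(\<integral>x. \<psi> x \<partial>m1) - (\<integral>x. \<psi> x \<partial>m2)\<bar> | \<psi>.
      1-lipschitz_on UNIV \<psi> \<and> (\<forall>x. x \<notin> {0..1} \<longrightarrow> \<psi> x = 0)}"

definition alpha :: "real measure \<Rightarrow> real measure \<Rightarrow> real set \<Rightarrow> real" where
  "alpha \<mu> \<nu> I = W1 (blowup \<mu> I) (blowup \<nu> I)"

end

theory Submission
  imports Defs
begin

text \<open>Write \<open>a\<^sub>J\<close> for the \<open>\<nu>\<close>-average of \<open>g\<close> on \<open>J\<close>. For \<open>J\<close> of generation \<open>m\<close> and a test function
  \<open>\<psi>\<close>, put \<open>f = \<psi> \<circ> T\<^sub>J\<close>, which is \<open>2\<^sup>m\<close>-Lipschitz; then \<open>\<mu>(J)(\<integral>\<psi> d\<mu>\<^sub>J - \<integral>\<psi> d\<nu>\<^sub>J) = \<integral>\<^sub>J f (g - a\<^sub>J) d\<nu>\<close>.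
  Splitting \<open>J\<close> into its children \<open>J'\<close> reproduces this quantity for the children plus
  \<open>\<Sigma> (a\<^sub>J\<^sub>' - a\<^sub>J) \<integral>\<^sub>J\<^sub>' f d\<nu>\<close>, and since \<open>\<Sigma> (a\<^sub>J\<^sub>' - a\<^sub>J) \<nu>(J') = 0\<close> the function \<open>f\<close> may there be replaced
  by \<open>f - f(c)\<close>, which is \<open>O(2\<^sup>-\<^sup>m)\<close> on \<open>J\<close>. Iterating \<open>N\<close> generations bounds \<open>\<alpha>(J) \<mu>(J)\<close> by
  \<open>\<Sigma>\<^sub>j 2\<^sup>-\<^sup>j E\<^sub>j(J) + 2\<^sup>1\<^sup>-\<^sup>N \<mu>(J)\<close>, where \<open>E\<^sub>j(J)\<close> is the \<open>L\<^sup>1(\<nu>)\<close> norm on \<open>J\<close> of the martingale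
  difference of \<open>g\<close> between generations \<open>m + j\<close> and \<open>m + j + 1\<close>. By Cauchy-Schwarz \<open>E\<^sub>j(J)\<^sup>2\<close> is at most
  \<open>\<nu>(J)\<close> times the squared \<open>L\<^sup>2\<close> norm of that difference, and for each \<open>j\<close> these norms, summed over
  all \<open>J\<close>, are bounded by \<open>\<parallel>g\<parallel>\<^sup>2\<close> by orthogonality. This gives \<open>C = 4\<close>.\<close>

lemma weighted_cauchy_schwarz:
  fixes w x :: "'a \<Rightarrow> real"
  assumes "finite A" "\<And>i. i \<in> A \<Longrightarrow> w i \<ge> 0"
  shows "(\<Sum>i\<in>A. w i * x i)^2 \<le> (\<Sum>i\<in>A. w i) * (\<Sum>i\<in>A. w i * (x i)^2)"
proof (cases "(\<Sum>i\<in>A. w i) = 0")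
  case True
  then have "\<forall>i\<in>A. w i = 0" using sum_nonneg_eq_0_iff[of A w] assms by auto
  then show ?thesis by simp
next
  case False
  define W where "W = (\<Sum>i\<in>A. w i)"
  define S where "S = (\<Sum>i\<in>A. w i * x i)"
  define P where "P = (\<Sum>i\<in>A. w i * (x i)^2)"
  have W: "W > 0" using False sum_nonneg[of A w] assms(2) unfolding W_def by fastforce
  define t where "t = S / W"
  have "0 \<le> (\<Sum>i\<in>A. w i * (x i - t)^2)" by (rule sum_nonneg) (simp add: assms(2))
  also have "\<dots> = (\<Sum>i\<in>A. w i * (x i)^2 - 2 * t * (w i * x i) + t^2 * w i)"
    by (rule sum.cong) (auto simp: power2_eq_square algebra_simps)
  also have "\<dots> = P - 2 * t * S + t^2 * W"
    by (simp add: sum.distrib sum_subtractf sum_distrib_left P_def S_def W_def)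
  also have "\<dots> = P - S^2 / W" using W by (simp add: t_def field_simps power2_eq_square)
  finally show ?thesis using W by (simp add: S_def W_def P_def field_simps)
qed

lemma geometric_cauchy_schwarz:
  fixes x :: "nat \<Rightarrow> real"
  shows "((\<Sum>j<N. (1/2)^j * x j) + (1/2)^N * y)^2 \<le> 2 * ((\<Sum>j<N. (1/2)^j * (x j)^2) + (1/2)^N * y^2)"
proof -
  define w where "w j = (if j < N then (1/2::real)^j else (1/2)^N)" for j
  define z where "z j = (if j < N then x j else y)" for j
  have "(\<Sum>j<N. (1/2::real)^j) = 2 - 2 * (1/2)^N"
    by (induction N) (auto simp: field_simps)
  then have W: "(\<Sum>j\<le>N. w j) \<le> 2"
    by (simp add: lessThan_Suc_atMost[symmetric] w_def)
  have "(\<Sum>j\<le>N. w j * z j)^2 \<le> (\<Sum>j\<le>N. w j) * (\<Sum>j\<le>N. w j * (z j)^2)"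
    by (rule weighted_cauchy_schwarz) (auto simp: w_def)
  also have "\<dots> \<le> 2 * (\<Sum>j\<le>N. w j * (z j)^2)"
    by (rule mult_right_mono[OF W]) (auto intro!: sum_nonneg simp: w_def)
  finally show ?thesis by (simp add: lessThan_Suc_atMost[symmetric] w_def z_def)
qed

text \<open>The averages \<open>m\<^sub>i/n\<^sub>i\<close> of two cells deviate from the joint average \<open>m/n\<close> in mean by at most
  the square root of \<open>n\<close> times the gain in \<open>\<Sum> m\<^sub>i\<^sup>2/n\<^sub>i\<close>; both sides are multiples of
  \<open>(m\<^sub>1 n\<^sub>2 - m\<^sub>2 n\<^sub>1)\<^sup>2\<close>, and the constant is \<open>4 n\<^sub>1 n\<^sub>2 \<le> n\<^sup>2\<close>.\<close>
lemma two_cell_deviation: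
  fixes n1 n2 m1 m2 :: real
  assumes n1: "n1 \<ge> 0" and n2: "n2 \<ge> 0" and z1: "n1 = 0 \<Longrightarrow> m1 = 0" and z2: "n2 = 0 \<Longrightarrow> m2 = 0"
  defines "n \<equiv> n1 + n2" and "m \<equiv> m1 + m2"
  shows "(n1 * \<bar>m1/n1 - m/n\<bar> + n2 * \<bar>m2/n2 - m/n\<bar>)^2 \<le> n * (m1^2/n1 + m2^2/n2 - m^2/n)"
    and "0 \<le> m1^2/n1 + m2^2/n2 - m^2/n"
proof -
  have "(n1 * \<bar>m1/n1 - m/n\<bar> + n2 * \<bar>m2/n2 - m/n\<bar>)^2 \<le> n * (m1^2/n1 + m2^2/n2 - m^2/n) \<and>
        0 \<le> m1^2/n1 + m2^2/n2 - m^2/n"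
  proof (cases "n1 = 0 \<or> n2 = 0")
    case True
    with z1 z2 n1 n2 show ?thesis by (auto simp: n_def m_def power2_eq_square)
  next
    case False
    then have p1: "n1 > 0" and p2: "n2 > 0" using n1 n2 by auto
    then have np: "n > 0" by (simp add: n_def)
    define X where "X = m1 * n2 - m2 * n1"
    have "n1 * (m1/n1 - m/n) = (m1*n - n1*m)/n" "n2 * (m2/n2 - m/n) = (m2*n - n2*m)/n"
      using p1 p2 np by (simp_all add: field_simps)
    moreover have "m1*n - n1*m = X" "m2*n - n2*m = - X"
      by (simp_all add: X_def n_def m_def algebra_simps)
    ultimately have h1: "n1 * \<bar>m1/n1 - m/n\<bar> = \<bar>X\<bar> / n" and h2: "n2 * \<bar>m2/n2 - m/n\<bar> = \<bar>X\<bar> / n"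
      using p1 p2 np by (metis abs_divide abs_minus_cancel abs_mult abs_of_pos)+
    have d: "m1^2/n1 + m2^2/n2 - m^2/n = X^2 / (n1 * n2 * n)" using p1 p2 np
      by (simp add: X_def n_def m_def field_simps power2_eq_square)
    have "4 * (n1 * n2) \<le> n^2"
      using zero_le_power2[of "n1 - n2"] by (simp add: n_def power2_eq_square algebra_simps)
    then have "X^2 * (4 * (n1 * n2)) \<le> X^2 * n^2" by (rule mult_left_mono) simp
    then have "(X^2 * 4) / n^2 \<le> X^2 / (n1 * n2)"
      using p1 p2 np by (simp add: divide_simps mult_ac)
    moreover have "(\<bar>X\<bar> / n + \<bar>X\<bar> / n)^2 = (X^2 * 4) / n^2"
      by (simp add: power2_eq_square field_simps)
    ultimately show ?thesis unfolding h1 h2 d using p1 p2 np by simp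
  qed
  then show "(n1 * \<bar>m1/n1 - m/n\<bar> + n2 * \<bar>m2/n2 - m/n\<bar>)^2 \<le> n * (m1^2/n1 + m2^2/n2 - m^2/n)"
    and "0 \<le> m1^2/n1 + m2^2/n2 - m^2/n" by auto
qed

section \<open>Integrals, blow-ups and the Wasserstein distance\<close>

lemma integral_indicator_disjoint_Union:
  fixes h :: "'a \<Rightarrow> real"
  assumes S: "finite S" "disjoint S" "S \<subseteq> sets M"
    and h: "integrable M (\<lambda>x. indicator (\<Union>S) x * h x)"
  shows "(\<integral>x. indicator (\<Union>S) x * h x \<partial>M) = (\<Sum>A\<in>S. \<integral>x. indicator A x * h x \<partial>M)"
proof -
  have "indicator (\<Union>S) x = (\<Sum>A\<in>S. indicator A x :: real)" for x
    using indicator_UN_disjoint[of S id x] S(1,2) by (simp add: disjoint_def disjoint_family_on_def)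
  then have "(\<integral>x. indicator (\<Union>S) x * h x \<partial>M) = (\<integral>x. (\<Sum>A\<in>S. indicator A x * h x) \<partial>M)"
    by (simp add: sum_distrib_right)
  also have "\<dots> = (\<Sum>A\<in>S. \<integral>x. indicator A x * h x \<partial>M)"
  proof (rule Bochner_Integration.integral_sum)
    fix A assume "A \<in> S"
    then have "(\<lambda>x. indicator A x * h x) = (\<lambda>x. indicator A x *\<^sub>R (indicator (\<Union>S) x * h x))"
      by (auto split: split_indicator)
    moreover have "integrable M (\<lambda>x. indicator A x *\<^sub>R (indicator (\<Union>S) x * h x))"
      using \<open>A \<in> S\<close> S(3) h by (intro integrable_mult_indicator) auto
    ultimately show "integrable M (\<lambda>x. indicator A x * h x)" by simp
  qed
  finally show ?thesis .
qed

lemma integral_scale_measure_real: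
  fixes h :: "'a \<Rightarrow> real"
  assumes c: "c \<ge> 0" and h: "h \<in> borel_measurable M"
  shows "integral\<^sup>L (scale_measure (ennreal c) M) h = c * integral\<^sup>L M h"
proof -
  have "scale_measure (ennreal c) M = density M (\<lambda>_. ennreal c)"
  proof (rule measure_eqI)
    fix A assume "A \<in> sets (scale_measure (ennreal c) M)"
    then show "emeasure (scale_measure (ennreal c) M) A = emeasure (density M (\<lambda>_. ennreal c)) A"
      by (simp add: emeasure_density nn_integral_cmult_indicator)
  qed simp
  then show ?thesis using integral_density[of h M "\<lambda>_. c"] h c by simp
qed

lemma borel_measurable_T_map [measurable]: "T_map I \<in> borel_measurable borel"
  unfolding T_map_def by measurable

lemma integral_blowup:
  fixes h :: "real \<Rightarrow> real"
  assumes M: "sets M = sets borel" and I: "I \<in> sets borel" and "measure M I \<noteq> 0"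
    and h: "h \<in> borel_measurable borel"
  shows "integral\<^sup>L (blowup M I) h = (\<integral>x. indicator I x * h (T_map I x) \<partial>M) / measure M I"
proof -
  have "integral\<^sup>L (blowup M I) h = integral\<^sup>L (distr (density M (indicator I)) borel (T_map I)) h / measure M I"
    unfolding blowup_def using assms(3) h by (simp add: integral_scale_measure_real)
  also have "integral\<^sup>L (distr (density M (indicator I)) borel (T_map I)) h
      = integral\<^sup>L (density M (indicator I)) (\<lambda>x. h (T_map I x))"
  proof (rule integral_distr)
    show "T_map I \<in> measurable (density M (indicator I)) borel"
      using measurable_cong_sets[of "density M (indicator I)" borel borel borel] M by simp
  qed (rule h)
  also have "\<dots> = integral\<^sup>L (density M (\<lambda>x. ennreal (indicator I x))) (\<lambda>x. h (T_map I x))"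
    by (simp add: ennreal_indicator)
  also have "\<dots> = (\<integral>x. indicator I x *\<^sub>R h (T_map I x) \<partial>M)"
  proof (rule integral_density)
    show "(\<lambda>x. h (T_map I x)) \<in> borel_measurable M"
      unfolding measurable_cong_sets[OF M refl] using h by measurable
    show "(indicator I :: real \<Rightarrow> real) \<in> borel_measurable M"
      unfolding measurable_cong_sets[OF M refl] using I by simp
  qed auto
  finally show ?thesis by simp
qed

lemma
  fixes m1 m2 :: "real measure"
  assumes "\<And>\<psi>. 1-lipschitz_on UNIV \<psi> \<Longrightarrow> (\<forall>x. x \<notin> {0..1} \<longrightarrow> \<psi> x = 0) \<Longrightarrow>
      \<bar>(\<integral>x. \<psi> x \<partial>m1) - (\<integral>x. \<psi> x \<partial>m2)\<bar> \<le> b"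
  shows W1_le: "W1 m1 m2 \<le> b" and W1_nonneg: "0 \<le> W1 m1 m2"
proof -
  let ?S = "{\<bar>(\<integral>x. \<psi> x \<partial>m1) - (\<integral>x. \<psi> x \<partial>m2)\<bar> | \<psi>.
      1-lipschitz_on UNIV \<psi> \<and> (\<forall>x. x \<notin> {0..1} \<longrightarrow> (\<psi> :: real \<Rightarrow> real) x = 0)}"
  have "0 \<in> ?S"
    by (rule CollectI, rule exI[of _ "\<lambda>_. 0"]) (simp add: lipschitz_on_def)
  moreover have "s \<le> b" if "s \<in> ?S" for s using that assms by blast
  ultimately show "W1 m1 m2 \<le> b" "0 \<le> W1 m1 m2"
    unfolding W1_def by (auto intro!: cSup_least cSup_upper bdd_aboveI)
qed

lemma lipschitz_supported_on_unit:
  fixes \<psi> :: "real \<Rightarrow> real"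
  assumes "1-lipschitz_on UNIV \<psi>" and "\<forall>x. x \<notin> {0..1} \<longrightarrow> \<psi> x = 0"
  shows "\<bar>\<psi> x - \<psi> y\<bar> \<le> \<bar>x - y\<bar>" "\<psi> \<in> borel_measurable borel" "\<bar>\<psi> x\<bar> \<le> 2"
proof -
  show lip: "\<bar>\<psi> x - \<psi> y\<bar> \<le> \<bar>x - y\<bar>" for x y
    using lipschitz_onD[OF assms(1), of x y] by (simp add: dist_real_def)
  show "\<psi> \<in> borel_measurable borel"
    using lipschitz_on_continuous_on[OF assms(1)] by (rule borel_measurable_continuous_onI)
  show "\<bar>\<psi> x\<bar> \<le> 2"
    using lip[of x 2] assms(2) by (cases "x \<in> {0..1}") auto
qed

section \<open>Dyadic systems\<close>

locale dyadic_system =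
  fixes D :: "nat \<Rightarrow> real set set"
  assumes gen_dyadic: "gen_dyadic_system D"
begin

lemma dyadic_interval: "J \<in> D k \<Longrightarrow> \<exists>a. J = {a..<a + (1/2)^k}"
  using gen_dyadic unfolding gen_dyadic_system_def by blast

lemma dyadic_partition: "\<exists>!J. J \<in> D k \<and> x \<in> J"
  by (rule spec[OF conjunct2[OF spec[OF conjunct1[OF gen_dyadic[unfolded gen_dyadic_system_def]]]]])

lemma dyadic_cover: obtains J where "J \<in> D k" "x \<in> J"
  using ex1_implies_ex[OF dyadic_partition] by blast

lemma dyadic_unique: "J1 \<in> D k \<Longrightarrow> J2 \<in> D k \<Longrightarrow> x \<in> J1 \<Longrightarrow> x \<in> J2 \<Longrightarrow> J1 = J2"
  using ex1E[OF dyadic_partition[of k x]] by metis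

lemma dyadic_split: "J \<in> D k \<Longrightarrow> \<exists>I1\<in>D (Suc k). \<exists>I2\<in>D (Suc k). I1 \<noteq> I2 \<and> J = I1 \<union> I2"
  using gen_dyadic unfolding gen_dyadic_system_def by blast

lemma dyadic_disjoint: "J1 \<in> D k \<Longrightarrow> J2 \<in> D k \<Longrightarrow> J1 \<noteq> J2 \<Longrightarrow> J1 \<inter> J2 = {}"
  using dyadic_unique by blast

lemma dyadic_nonempty: "J \<in> D k \<Longrightarrow> J \<noteq> {}"
  by (drule dyadic_interval) auto

lemma dyadic_diameter: "J \<in> D m \<Longrightarrow> x \<in> J \<Longrightarrow> y \<in> J \<Longrightarrow> \<bar>x - y\<bar> \<le> (1/2)^m"
  by (drule dyadic_interval) auto

lemma dyadic_borel: "J \<in> D k \<Longrightarrow> J \<in> sets borel"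
  by (drule dyadic_interval) auto

lemma dyadic_ancestor: "J \<in> D (m + n) \<Longrightarrow> \<exists>P\<in>D m. J \<subseteq> P"
proof (induction n arbitrary: J)
  case (Suc n)
  obtain x where x: "x \<in> J" using dyadic_nonempty[OF Suc.prems] by blast
  obtain P where P: "P \<in> D (m + n)" "x \<in> P" by (rule dyadic_cover)
  obtain I1 I2 where I: "I1 \<in> D (m + Suc n)" "I2 \<in> D (m + Suc n)" "P = I1 \<union> I2"
    using dyadic_split[OF P(1)] by auto
  have "J = I1 \<or> J = I2"
    using P(2) I x dyadic_unique[OF Suc.prems] by blast
  then have "J \<subseteq> P" using I(3) by blast
  moreover obtain Q where "Q \<in> D m" "P \<subseteq> Q" using Suc.IH[OF P(1)] by blast
  ultimately show ?case by (meson order_trans)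
qed auto

definition descendants :: "nat \<Rightarrow> nat \<Rightarrow> real set \<Rightarrow> real set set" where
  "descendants m n J = {J' \<in> D (m + n). J' \<subseteq> J}"

lemma descendants_D: "J' \<in> descendants m n J \<Longrightarrow> J' \<in> D (m + n)"
  and descendants_subset: "J' \<in> descendants m n J \<Longrightarrow> J' \<subseteq> J"
  unfolding descendants_def by auto

lemma descendants_0:
  assumes "J \<in> D m" shows "descendants m 0 J = {J}"
proof -
  have "J' = J" if J': "J' \<in> D m" "J' \<subseteq> J" for J'
  proof -
    obtain x where "x \<in> J'" using dyadic_nonempty[OF J'(1)] by blast
    then show ?thesis using dyadic_unique[OF J'(1) assms] J'(2) by blast
  qed
  with assms show ?thesis unfolding descendants_def by auto
qed

lemma Union_descendants:
  assumes "J \<in> D m" shows "\<Union>(descendants m n J) = J"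
proof
  show "J \<subseteq> \<Union>(descendants m n J)"
  proof
    fix x assume x: "x \<in> J"
    obtain J' where J': "J' \<in> D (m + n)" "x \<in> J'" by (rule dyadic_cover)
    obtain P where P: "P \<in> D m" "J' \<subseteq> P" using dyadic_ancestor[OF J'(1)] by blast
    have "P = J" by (rule dyadic_unique[OF P(1) assms, of x]) (use J' P x in auto)
    with P have "J' \<subseteq> J" by simp
    with J' show "x \<in> \<Union>(descendants m n J)" unfolding descendants_def by blast
  qed
qed (auto simp: descendants_def)

lemma descendants_add:
  assumes "J \<in> D m"
  shows "descendants m (k + j) J = (\<Union>I\<in>descendants m k J. descendants (m + k) j I)"
proof
  show "descendants m (k + j) J \<subseteq> (\<Union>I\<in>descendants m k J. descendants (m + k) j I)"
  proof
    fix J' assume J': "J' \<in> descendants m (k + j) J"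
    then have J'D: "J' \<in> D (m + k + j)" by (simp add: descendants_def add.assoc)
    obtain I where I: "I \<in> D (m + k)" "J' \<subseteq> I" using dyadic_ancestor[OF J'D] by blast
    obtain x where x: "x \<in> J'" using dyadic_nonempty[OF J'D] by blast
    obtain P where P: "P \<in> D m" "I \<subseteq> P" using dyadic_ancestor[OF I(1)] by blast
    have "P = J" by (rule dyadic_unique[OF P(1) assms, of x]) (use x I P descendants_subset[OF J'] in auto)
    with P have "I \<subseteq> J" by simp
    then show "J' \<in> (\<Union>I\<in>descendants m k J. descendants (m + k) j I)"
      using I J'D unfolding descendants_def by blast
  qed
next
  show "(\<Union>I\<in>descendants m k J. descendants (m + k) j I) \<subseteq> descendants m (k + j) J"
  proof
    fix J' assume "J' \<in> (\<Union>I\<in>descendants m k J. descendants (m + k) j I)"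
    then obtain I where "I \<subseteq> J" "J' \<in> D (m + k + j)" "J' \<subseteq> I"
      unfolding descendants_def by blast
    then show "J' \<in> descendants m (k + j) J" unfolding descendants_def by (simp add: add.assoc)
  qed
qed

lemma descendants_1:
  assumes "I1 \<in> D (Suc m)" "I2 \<in> D (Suc m)" "J = I1 \<union> I2"
  shows "descendants m 1 J = {I1, I2}"
proof -
  have "J' = I1 \<or> J' = I2" if J': "J' \<in> D (Suc m)" "J' \<subseteq> J" for J'
  proof -
    obtain x where x: "x \<in> J'" using dyadic_nonempty[OF J'(1)] by blast
    then have "x \<in> I1 \<or> x \<in> I2" using J'(2) assms(3) by blast
    then show ?thesis
      using dyadic_unique[OF J'(1) assms(1) x] dyadic_unique[OF J'(1) assms(2) x] by blast
  qed
  with assms show ?thesis unfolding descendants_def by auto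
qed

lemma finite_descendants: "J \<in> D m \<Longrightarrow> finite (descendants m n J)"
proof (induction n)
  case (Suc n)
  have "descendants m (n + 1) J = (\<Union>I\<in>descendants m n J. descendants (m + n) 1 I)"
    by (rule descendants_add[OF Suc.prems])
  moreover have "finite (descendants (m + n) 1 I)" if I: "I \<in> D (m + n)" for I
    using dyadic_split[OF I] descendants_1 by force
  ultimately show ?case using Suc descendants_D by auto
qed (simp add: descendants_0)

lemma sum_descendants_add:
  assumes "J \<in> D m"
  shows "(\<Sum>J'\<in>descendants m (k + j) J. h J') = (\<Sum>I\<in>descendants m k J. \<Sum>J'\<in>descendants (m + k) j I. h J')"
  unfolding descendants_add[OF assms]
proof (rule sum.UNION_disjoint)
  show "finite (descendants m k J)" by (rule finite_descendants[OF assms])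
  show "\<forall>I\<in>descendants m k J. finite (descendants (m + k) j I)"
    using finite_descendants descendants_D by blast
  show "\<forall>I1\<in>descendants m k J. \<forall>I2\<in>descendants m k J. I1 \<noteq> I2 \<longrightarrow>
      descendants (m + k) j I1 \<inter> descendants (m + k) j I2 = {}"
  proof (intro ballI impI)
    fix I1 I2 assume I: "I1 \<in> descendants m k J" "I2 \<in> descendants m k J" "I1 \<noteq> I2"
    then have "I1 \<inter> I2 = {}" using dyadic_disjoint descendants_D by blast
    then show "descendants (m + k) j I1 \<inter> descendants (m + k) j I2 = {}"
      unfolding descendants_def using dyadic_nonempty by blast
  qed
qed

lemma childrenE:
  assumes "J \<in> D m"
  obtains I1 I2 where "I1 \<in> D (Suc m)" "I2 \<in> D (Suc m)" "I1 \<noteq> I2" "descendants m 1 J = {I1, I2}"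
  using dyadic_split[OF assms] descendants_1 by metis

lemma integral_indicator_descendants:
  fixes h :: "real \<Rightarrow> real"
  assumes M: "sets M = sets borel" and J: "J \<in> D m" and h: "integrable M (\<lambda>x. indicator J x * h x)"
  shows "(\<integral>x. indicator J x * h x \<partial>M) = (\<Sum>J'\<in>descendants m n J. \<integral>x. indicator J' x * h x \<partial>M)"
proof -
  have "disjoint (descendants m n J)"
    unfolding disjoint_def using dyadic_disjoint descendants_D by blast
  moreover have "descendants m n J \<subseteq> sets M" using M dyadic_borel descendants_D by auto
  ultimately show ?thesis
    using integral_indicator_disjoint_Union[of "descendants m n J" M h] h
    unfolding Union_descendants[OF J] by (simp add: finite_descendants[OF J])
qed

definition level :: "real set \<Rightarrow> nat" where
  "level I = (SOME k. I \<in> D k)"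

definition root :: "real set \<Rightarrow> real set" where
  "root I = (SOME J. J \<in> D 0 \<and> I \<subseteq> J)"

lemma D_level: "I \<in> D k \<Longrightarrow> I \<in> D (level I)"
  unfolding level_def by (rule someI)

lemma
  assumes "I \<in> D k"
  shows root_D: "root I \<in> D 0" and mem_descendants_root: "I \<in> descendants 0 k (root I)"
proof -
  have "\<exists>J. J \<in> D 0 \<and> I \<subseteq> J" using dyadic_ancestor[of I 0 k] assms by auto
  then have "root I \<in> D 0 \<and> I \<subseteq> root I" unfolding root_def by (rule someI_ex)
  with assms show "root I \<in> D 0" "I \<in> descendants 0 k (root I)" by (simp_all add: descendants_def)
qed

end

section \<open>Averages of \<open>g\<close> and their martingale differences\<close>

locale dyadic_density = dyadic_system D for D :: "nat \<Rightarrow> real set set" +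
  fixes \<nu> :: "real measure" and g :: "real \<Rightarrow> real"
  assumes radon: "radon_measure \<nu>"
    and g_borel: "g \<in> borel_measurable borel"
    and g_nonneg: "\<And>x. g x \<ge> 0"
    and g_square_integrable: "integrable \<nu> (\<lambda>x. (g x)^2)"
begin

lemma sets_\<nu> [simp, measurable_cong]: "sets \<nu> = sets borel"
  using radon unfolding radon_measure_def by blast

lemma space_\<nu> [simp]: "space \<nu> = UNIV"
  using sets_eq_imp_space_eq[OF sets_\<nu>] by simp

lemma g_measurable [measurable]: "g \<in> borel_measurable \<nu>"
  using g_borel measurable_cong_sets[OF sets_\<nu> refl] by simp

lemma dyadic_sets: "J \<in> D k \<Longrightarrow> J \<in> sets \<nu>"
  using dyadic_borel by simp

lemma dyadic_finite_measure: "J \<in> D k \<Longrightarrow> emeasure \<nu> J \<noteq> \<infinity>"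
proof -
  assume "J \<in> D k"
  then obtain a where a: "J = {a..<a + (1/2)^k}" using dyadic_interval by blast
  have "emeasure \<nu> J \<le> emeasure \<nu> {a..a + (1/2)^k}" by (rule emeasure_mono) (auto simp: a)
  also have "\<dots> < \<infinity>" using radon unfolding radon_measure_def by auto
  finally show ?thesis by simp
qed

lemma integrable_indicator_dyadic: "J \<in> D k \<Longrightarrow> integrable \<nu> (indicator J :: real \<Rightarrow> real)"
  using dyadic_sets dyadic_finite_measure by (simp add: less_top)

lemma integrable_indicator_g2: "J \<in> D k \<Longrightarrow> integrable \<nu> (\<lambda>x. indicator J x * (g x)^2)"
  using integrable_mult_indicator[OF dyadic_sets g_square_integrable] by simp

text \<open>\<open>g\<close> is only square integrable; on a set of finite measure \<open>g \<le> 1 + g\<^sup>2\<close> makes it integrable.\<close>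
lemma integrable_indicator_g:
  assumes J: "J \<in> D k" shows "integrable \<nu> (\<lambda>x. indicator J x * g x)"
proof (rule Bochner_Integration.integrable_bound)
  show "integrable \<nu> (\<lambda>x. indicator J x + indicator J x * (g x)^2)"
    using integrable_indicator_dyadic[OF J] integrable_indicator_g2[OF J] by simp
  have "g x \<le> 1 + (g x)^2" for x
    using zero_le_power2[of "g x - 1"] g_nonneg[of x] by (simp add: power2_eq_square algebra_simps)
  then show "AE x in \<nu>. norm (indicator J x * g x) \<le> norm (indicator J x + indicator J x * (g x)^2)"
    using g_nonneg by (auto split: split_indicator)
qed (use J dyadic_sets in simp)

definition vol :: "real set \<Rightarrow> real" where
  "vol J = measure \<nu> J"

definition mass :: "real set \<Rightarrow> real" where
  "mass J = (\<integral>x. indicator J x * g x \<partial>\<nu>)"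

definition energy :: "real set \<Rightarrow> real" where
  "energy J = (\<integral>x. indicator J x * (g x)^2 \<partial>\<nu>)"

definition avg :: "real set \<Rightarrow> real" where
  "avg J = mass J / vol J"

text \<open>The energy of the average: \<open>avg_energy J = avg J\<^sup>2 * vol J\<close>.\<close>
definition avg_energy :: "real set \<Rightarrow> real" where
  "avg_energy J = (mass J)^2 / vol J"

lemma vol_nonneg: "vol J \<ge> 0"
  by (simp add: vol_def)

lemma mass_nonneg: "mass J \<ge> 0"
  unfolding mass_def using g_nonneg by (intro integral_nonneg_AE) (auto split: split_indicator)

lemma avg_nonneg: "avg J \<ge> 0"
  by (simp add: avg_def mass_nonneg vol_nonneg)

lemma avg_energy_nonneg: "avg_energy J \<ge> 0"
  by (simp add: avg_energy_def vol_nonneg)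

lemma vol_descendants: "J \<in> D m \<Longrightarrow> vol J = (\<Sum>J'\<in>descendants m n J. vol J')"
  using integral_indicator_descendants[OF sets_\<nu>, of J m "\<lambda>_. 1" n]
  by (simp add: vol_def integrable_indicator_dyadic descendants_D cong: sum.cong)

lemma mass_descendants: "J \<in> D m \<Longrightarrow> mass J = (\<Sum>J'\<in>descendants m n J. mass J')"
  unfolding mass_def by (rule integral_indicator_descendants[OF sets_\<nu> _ integrable_indicator_g])

lemma energy_descendants: "J \<in> D m \<Longrightarrow> energy J = (\<Sum>J'\<in>descendants m n J. energy J')"
  unfolding energy_def by (rule integral_indicator_descendants[OF sets_\<nu> _ integrable_indicator_g2])

lemma mass_eq_0: assumes J: "J \<in> D k" and "vol J = 0" shows "mass J = 0"
proof -
  have "emeasure \<nu> J = 0"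
    using assms dyadic_finite_measure[OF J] by (simp add: vol_def emeasure_eq_ennreal_measure)
  then have "J \<in> null_sets \<nu>" using dyadic_sets[OF J] by auto
  then have "AE x in \<nu>. indicator J x * g x = 0" by (auto dest: AE_not_in)
  then show ?thesis unfolding mass_def by (rule integral_eq_zero_AE)
qed

lemma avg_mult_vol: "J \<in> D k \<Longrightarrow> avg J * vol J = mass J"
  unfolding avg_def using mass_eq_0 by (cases "vol J = 0") auto

lemma avg_energy_le_energy:
  assumes J: "J \<in> D k" shows "avg_energy J \<le> energy J"
proof (cases "vol J = 0")
  case True
  have "energy J \<ge> 0" unfolding energy_def by (intro integral_nonneg_AE) (auto split: split_indicator)
  with True show ?thesis by (simp add: avg_energy_def)
next
  case False
  then have vol: "vol J > 0" using vol_nonneg[of J] by simp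
  define a where "a = avg J"
  have "0 \<le> (\<integral>x. indicator J x * (g x - a)^2 \<partial>\<nu>)"
    by (intro integral_nonneg_AE) (auto split: split_indicator)
  also have "\<dots> = (\<integral>x. indicator J x * (g x)^2 - 2 * a * (indicator J x * g x) + a^2 * indicator J x \<partial>\<nu>)"
    by (rule Bochner_Integration.integral_cong) (auto split: split_indicator simp: power2_eq_square algebra_simps)
  also have "\<dots> = energy J - 2 * a * mass J + a^2 * vol J"
    using integrable_indicator_g[OF J] integrable_indicator_g2[OF J] integrable_indicator_dyadic[OF J]
    by (simp add: energy_def mass_def vol_def)
  also have "\<dots> = energy J - avg_energy J"
    using vol by (simp add: a_def avg_def avg_energy_def field_simps power2_eq_square)
  finally show ?thesis by simp
qed

lemma sum_avg_diff_vol_descendants: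
  assumes J: "J \<in> D m" shows "(\<Sum>J'\<in>descendants m n J. (avg J' - avg J) * vol J') = 0"
proof -
  have "(\<Sum>J'\<in>descendants m n J. avg J' * vol J') = (\<Sum>J'\<in>descendants m n J. mass J')"
    using avg_mult_vol descendants_D by (intro sum.cong) blast+
  then show ?thesis
    using mass_descendants[OF J, of n] vol_descendants[OF J, of n] avg_mult_vol[OF J]
    by (simp add: left_diff_distrib sum_subtractf sum_distrib_left)
qed

text \<open>By orthogonality, \<open>energy_gain m J\<close> is the squared \<open>L\<^sup>2(\<nu>)\<close> norm on \<open>J\<close> of the martingale
  difference of \<open>g\<close> between generations \<open>m\<close> and \<open>m + 1\<close>; \<open>avg_variation m J\<close> is its \<open>L\<^sup>1(\<nu>)\<close> norm.\<close>
definition energy_gain :: "nat \<Rightarrow> real set \<Rightarrow> real" where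
  "energy_gain m J = (\<Sum>J'\<in>descendants m 1 J. avg_energy J') - avg_energy J"

definition avg_variation :: "nat \<Rightarrow> real set \<Rightarrow> real" where
  "avg_variation m J = (\<Sum>J'\<in>descendants m 1 J. vol J' * \<bar>avg J' - avg J\<bar>)"

lemma avg_variation_nonneg: "avg_variation m J \<ge> 0"
  unfolding avg_variation_def by (intro sum_nonneg) (simp add: vol_nonneg)

lemma
  assumes J: "J \<in> D m"
  shows avg_variation_square_le: "(avg_variation m J)^2 \<le> vol J * energy_gain m J"
    and energy_gain_nonneg: "0 \<le> energy_gain m J"
proof -
  obtain I1 I2 where I: "I1 \<in> D (Suc m)" "I2 \<in> D (Suc m)" "I1 \<noteq> I2" "descendants m 1 J = {I1, I2}"
    by (rule childrenE[OF J])
  have vol: "vol J = vol I1 + vol I2" and mass: "mass J = mass I1 + mass I2"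
    using vol_descendants[OF J, of 1] mass_descendants[OF J, of 1] I(3,4) by simp_all
  have "avg_variation m J = vol I1 * \<bar>mass I1/vol I1 - mass J/vol J\<bar> + vol I2 * \<bar>mass I2/vol I2 - mass J/vol J\<bar>"
    and "energy_gain m J = (mass I1)^2/vol I1 + (mass I2)^2/vol I2 - (mass J)^2/vol J"
    using I(3,4) by (simp_all add: avg_variation_def energy_gain_def avg_def avg_energy_def)
  then show "(avg_variation m J)^2 \<le> vol J * energy_gain m J" and "0 \<le> energy_gain m J"
    using two_cell_deviation[OF vol_nonneg vol_nonneg mass_eq_0[OF I(1)] mass_eq_0[OF I(2)]]
    unfolding vol mass by simp_all
qed

definition energy_gain_sum :: "nat \<Rightarrow> nat \<Rightarrow> real set \<Rightarrow> real" where
  "energy_gain_sum m j J = (\<Sum>J'\<in>descendants m j J. energy_gain (m + j) J')"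

definition avg_variation_sum :: "nat \<Rightarrow> nat \<Rightarrow> real set \<Rightarrow> real" where
  "avg_variation_sum m j J = (\<Sum>J'\<in>descendants m j J. avg_variation (m + j) J')"

lemma energy_gain_sum_nonneg: "J \<in> D m \<Longrightarrow> energy_gain_sum m j J \<ge> 0"
  unfolding energy_gain_sum_def by (intro sum_nonneg energy_gain_nonneg descendants_D)

lemma energy_gain_sum_add:
  "J \<in> D m \<Longrightarrow> (\<Sum>I\<in>descendants m k J. energy_gain_sum (m + k) j I) = energy_gain_sum m (k + j) J"
  unfolding energy_gain_sum_def by (simp add: sum_descendants_add add.assoc)

lemma avg_variation_sum_add:
  "J \<in> D m \<Longrightarrow> (\<Sum>I\<in>descendants m k J. avg_variation_sum (m + k) j I) = avg_variation_sum m (k + j) J"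
  unfolding avg_variation_sum_def by (simp add: sum_descendants_add add.assoc)

lemma avg_variation_sum_square_le:
  assumes J: "J \<in> D m" shows "(avg_variation_sum m j J)^2 \<le> vol J * energy_gain_sum m j J"
proof -
  let ?S = "descendants m j J"
  have "avg_variation_sum m j J = (\<Sum>J'\<in>?S. vol J' * (avg_variation (m + j) J' / vol J'))"
    unfolding avg_variation_sum_def
  proof (rule sum.cong)
    fix J' assume J': "J' \<in> ?S"
    show "avg_variation (m + j) J' = vol J' * (avg_variation (m + j) J' / vol J')"
      using avg_variation_square_le[OF descendants_D[OF J']] avg_variation_nonneg[of "m + j" J']
      by (cases "vol J' = 0") auto
  qed simp
  also have "(\<dots>)^2 \<le> (\<Sum>J'\<in>?S. vol J') * (\<Sum>J'\<in>?S. vol J' * (avg_variation (m + j) J' / vol J')^2)"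
    by (rule weighted_cauchy_schwarz[OF finite_descendants[OF J] vol_nonneg])
  also have "\<dots> \<le> vol J * energy_gain_sum m j J"
    unfolding vol_descendants[OF J, of j, symmetric] energy_gain_sum_def
  proof (intro mult_left_mono sum_mono vol_nonneg)
    fix J' assume J': "J' \<in> ?S"
    show "vol J' * (avg_variation (m + j) J' / vol J')^2 \<le> energy_gain (m + j) J'"
      using avg_variation_square_le[OF descendants_D[OF J']] energy_gain_nonneg[OF descendants_D[OF J']]
        vol_nonneg[of J'] by (cases "vol J' = 0") (simp_all add: power_divide field_simps power2_eq_square)
  qed
  finally show ?thesis .
qed

lemma sum_avg_energy_descendants:
  assumes J: "J \<in> D m"
  shows "(\<Sum>J'\<in>descendants m n J. avg_energy J') = avg_energy J + (\<Sum>i<n. energy_gain_sum m i J)"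
proof (induction n)
  case (Suc n)
  have "(\<Sum>J'\<in>descendants m (n + 1) J. avg_energy J')
      = (\<Sum>I\<in>descendants m n J. \<Sum>J'\<in>descendants (m + n) 1 I. avg_energy J')"
    by (rule sum_descendants_add[OF J])
  also have "\<dots> = (\<Sum>I\<in>descendants m n J. avg_energy I + energy_gain (m + n) I)"
    by (simp add: energy_gain_def)
  also have "\<dots> = (\<Sum>I\<in>descendants m n J. avg_energy I) + energy_gain_sum m n J"
    by (simp add: sum.distrib energy_gain_sum_def)
  finally show ?case using Suc by simp
qed (simp add: descendants_0[OF J])

lemma sum_energy_gain_sum_le_energy:
  assumes J: "J \<in> D m" shows "(\<Sum>i<n. energy_gain_sum m i J) \<le> energy J"
proof -
  have "avg_energy J + (\<Sum>i<n. energy_gain_sum m i J) = (\<Sum>J'\<in>descendants m n J. avg_energy J')"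
    by (rule sum_avg_energy_descendants[OF J, symmetric])
  also have "\<dots> \<le> (\<Sum>J'\<in>descendants m n J. energy J')"
    using avg_energy_le_energy descendants_D by (intro sum_mono) blast
  also have "\<dots> = energy J" by (rule energy_descendants[OF J, symmetric])
  finally show ?thesis using avg_energy_nonneg[of J] by linarith
qed

section \<open>Lipschitz test functions\<close>

text \<open>\<open>deviation f J\<close> is \<open>mass J\<close> times the difference of the means of \<open>f\<close> over \<open>J\<close> with respect
  to \<open>g \<nu>\<close> and to \<open>\<nu>\<close>.\<close>
definition deviation :: "(real \<Rightarrow> real) \<Rightarrow> real set \<Rightarrow> real" where
  "deviation f J = (\<integral>x. indicator J x * (f x * g x) \<partial>\<nu>) - avg J * (\<integral>x. indicator J x * f x \<partial>\<nu>)"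

end

locale dyadic_lipschitz_test = dyadic_density D \<nu> g for D \<nu> g +
  fixes f :: "real \<Rightarrow> real" and L B :: real
  assumes f_lipschitz: "\<And>x y. \<bar>f x - f y\<bar> \<le> L * \<bar>x - y\<bar>"
    and f_borel: "f \<in> borel_measurable borel"
    and f_bounded: "\<And>x. \<bar>f x\<bar> \<le> B"
begin

lemma L_nonneg: "L \<ge> 0"
proof -
  have "\<bar>f 1 - f 0\<bar> \<le> L" using f_lipschitz[of 1 0] by simp
  then show ?thesis by (rule order_trans[OF abs_ge_zero])
qed

lemma f_measurable [measurable]: "f \<in> borel_measurable \<nu>"
  using f_borel measurable_cong_sets[OF sets_\<nu> refl] by simp

lemma f_oscillation: "J \<in> D m \<Longrightarrow> x \<in> J \<Longrightarrow> y \<in> J \<Longrightarrow> \<bar>f x - f y\<bar> \<le> L * (1/2)^m"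
  using f_lipschitz[of x y] mult_left_mono[OF dyadic_diameter L_nonneg] by fastforce

lemma integrable_indicator_f_mult:
  assumes "integrable \<nu> (\<lambda>x. indicator J x * h x)"
  shows "integrable \<nu> (\<lambda>x. indicator J x * (f x * h x))"
proof (rule Bochner_Integration.integrable_bound)
  show "integrable \<nu> (\<lambda>x. B * (indicator J x * h x))" using assms(1) by simp
  show "AE x in \<nu>. norm (indicator J x * (f x * h x)) \<le> norm (B * (indicator J x * h x))"
  proof -
    have "\<bar>f x\<bar> * \<bar>h x\<bar> \<le> \<bar>B\<bar> * \<bar>h x\<bar>" for x
      using f_bounded[of x] abs_ge_self[of B] by (intro mult_right_mono) auto
    then show ?thesis by (auto simp: abs_mult split: split_indicator)
  qed
  have "(\<lambda>x. f x * (indicator J x * h x)) \<in> borel_measurable \<nu>"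
    using borel_measurable_integrable[OF assms] by measurable
  then show "(\<lambda>x. indicator J x * (f x * h x)) \<in> borel_measurable \<nu>"
    by (simp add: mult.left_commute)
qed

lemma integrable_indicator_f: "J \<in> D k \<Longrightarrow> integrable \<nu> (\<lambda>x. indicator J x * f x)"
  using integrable_indicator_f_mult[of J "\<lambda>_. 1"] integrable_indicator_dyadic by simp

lemma integrable_indicator_fg: "J \<in> D k \<Longrightarrow> integrable \<nu> (\<lambda>x. indicator J x * (f x * g x))"
  using integrable_indicator_f_mult[OF integrable_indicator_g] by simp

lemma integral_indicator_shift:
  assumes "integrable \<nu> (\<lambda>x. indicator J x * h x)" "integrable \<nu> (\<lambda>x. indicator J x * (f x * h x))"
  shows "(\<integral>x. indicator J x * (f x - c) * h x \<partial>\<nu>)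
    = (\<integral>x. indicator J x * (f x * h x) \<partial>\<nu>) - c * (\<integral>x. indicator J x * h x \<partial>\<nu>)"
proof -
  have "(\<integral>x. indicator J x * (f x - c) * h x \<partial>\<nu>)
      = (\<integral>x. indicator J x * (f x * h x) - c * (indicator J x * h x) \<partial>\<nu>)"
    by (simp add: algebra_simps)
  with assms show ?thesis by simp
qed

lemma integral_oscillation_le:
  assumes J: "J \<in> D m" "c \<in> J" "I \<subseteq> J"
    and w: "\<And>x. w x \<ge> 0" "integrable \<nu> (\<lambda>x. indicator I x * w x)"
  shows "\<bar>\<integral>x. indicator I x * (f x - f c) * w x \<partial>\<nu>\<bar> \<le> L * (1/2)^m * (\<integral>x. indicator I x * w x \<partial>\<nu>)"
proof -
  have bound: "\<bar>indicator I x * (f x - f c) * w x\<bar> \<le> L * (1/2)^m * (indicator I x * w x)" for x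
    using f_oscillation[OF J(1) _ J(2), of x] J(3) w(1)[of x]
    by (auto simp: abs_mult intro!: mult_right_mono split: split_indicator)
  have "\<bar>\<integral>x. indicator I x * (f x - f c) * w x \<partial>\<nu>\<bar> \<le> (\<integral>x. L * (1/2)^m * (indicator I x * w x) \<partial>\<nu>)"
  proof (rule integral_abs_bound_integral)
    show "integrable \<nu> (\<lambda>x. L * (1/2)^m * (indicator I x * w x))" using w(2) by simp
    then show "integrable \<nu> (\<lambda>x. indicator I x * (f x - f c) * w x)"
    proof (rule Bochner_Integration.integrable_bound)
      have "(\<lambda>x. (f x - f c) * (indicator I x * w x)) \<in> borel_measurable \<nu>"
        using borel_measurable_integrable[OF w(2)] by measurable
      then show "(\<lambda>x. indicator I x * (f x - f c) * w x) \<in> borel_measurable \<nu>"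
        by (simp add: mult_ac)
    qed (simp add: order_trans[OF bound abs_ge_self])
  qed (rule bound)
  then show ?thesis by simp
qed

lemma deviation_le_mass:
  assumes J: "J \<in> D m" shows "\<bar>deviation f J\<bar> \<le> L * (1/2)^m * (2 * mass J)"
proof -
  obtain c where c: "c \<in> J" using dyadic_nonempty[OF J] by blast
  have shift_g: "(\<integral>x. indicator J x * (f x - f c) * g x \<partial>\<nu>)
      = (\<integral>x. indicator J x * (f x * g x) \<partial>\<nu>) - f c * mass J"
    unfolding mass_def
    by (rule integral_indicator_shift[OF integrable_indicator_g[OF J] integrable_indicator_fg[OF J]])
  have shift_1: "(\<integral>x. indicator J x * (f x - f c) \<partial>\<nu>) = (\<integral>x. indicator J x * f x \<partial>\<nu>) - f c * vol J"
    using integral_indicator_shift[of J "\<lambda>_. 1" "f c"] integrable_indicator_dyadic[OF J]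
      integrable_indicator_f[OF J] by (simp add: vol_def)
  have "deviation f J = (\<integral>x. indicator J x * (f x - f c) * g x \<partial>\<nu>)
      - avg J * (\<integral>x. indicator J x * (f x - f c) \<partial>\<nu>)"
    unfolding shift_g shift_1 deviation_def using avg_mult_vol[OF J] by (simp add: algebra_simps)
  also have "\<bar>\<dots>\<bar> \<le> L * (1/2)^m * mass J + avg J * (L * (1/2)^m * vol J)"
  proof -
    have "\<bar>\<integral>x. indicator J x * (f x - f c) * g x \<partial>\<nu>\<bar> \<le> L * (1/2)^m * mass J"
      using integral_oscillation_le[OF J c order_refl g_nonneg integrable_indicator_g[OF J]]
      by (simp add: mass_def)
    moreover have "\<bar>\<integral>x. indicator J x * (f x - f c) \<partial>\<nu>\<bar> \<le> L * (1/2)^m * vol J"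
      using integral_oscillation_le[OF J c order_refl, of "\<lambda>_. 1"] integrable_indicator_dyadic[OF J]
      by (simp add: vol_def)
    then have "\<bar>avg J * (\<integral>x. indicator J x * (f x - f c) \<partial>\<nu>)\<bar> \<le> avg J * (L * (1/2)^m * vol J)"
      using avg_nonneg[of J] by (simp add: abs_mult mult_left_mono)
    ultimately show ?thesis by (smt (verit) abs_triangle_ineq4)
  qed
  also have "\<dots> = L * (1/2)^m * (2 * mass J)"
    using avg_mult_vol[OF J] by (simp add: algebra_simps)
  finally show ?thesis .
qed

lemma deviation_children:
  assumes J: "J \<in> D m"
  shows "deviation f J = (\<Sum>J'\<in>descendants m 1 J. deviation f J')
    + (\<Sum>J'\<in>descendants m 1 J. (avg J' - avg J) * (\<integral>x. indicator J' x * f x \<partial>\<nu>))"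
  using integral_indicator_descendants[OF sets_\<nu> J integrable_indicator_fg[OF J], of 1]
    integral_indicator_descendants[OF sets_\<nu> J integrable_indicator_f[OF J], of 1]
  by (simp add: deviation_def sum_subtractf sum_distrib_left algebra_simps)

lemma abs_sum_avg_diff_integral_le:
  assumes J: "J \<in> D m"
  shows "\<bar>\<Sum>J'\<in>descendants m 1 J. (avg J' - avg J) * (\<integral>x. indicator J' x * f x \<partial>\<nu>)\<bar>
    \<le> L * (1/2)^m * avg_variation m J"
proof -
  let ?C = "descendants m 1 J"
  obtain c where c: "c \<in> J" using dyadic_nonempty[OF J] by blast
  have C: "J' \<in> D (Suc m)" "J' \<subseteq> J" if "J' \<in> ?C" for J'
    using descendants_D[OF that] descendants_subset[OF that] by auto
  have shift: "(\<integral>x. indicator J' x * f x \<partial>\<nu>) = (\<integral>x. indicator J' x * (f x - f c) \<partial>\<nu>) + f c * vol J'"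
    if "J' \<in> ?C" for J'
    using integral_indicator_shift[of J' "\<lambda>_. 1" "f c"] integrable_indicator_dyadic[OF C(1)[OF that]]
      integrable_indicator_f[OF C(1)[OF that]] by (simp add: vol_def)
  \<comment> \<open>by the balance of the averages, \<open>f\<close> may be replaced by \<open>f - f c\<close>, which is small on \<open>J\<close>\<close>
  have "(\<Sum>J'\<in>?C. (avg J' - avg J) * (\<integral>x. indicator J' x * f x \<partial>\<nu>))
      = (\<Sum>J'\<in>?C. (avg J' - avg J) * (\<integral>x. indicator J' x * (f x - f c) \<partial>\<nu>))
        + f c * (\<Sum>J'\<in>?C. (avg J' - avg J) * vol J')"
    by (simp add: shift distrib_left sum.distrib sum_distrib_left mult.left_commute cong: sum.cong)
  also have "\<dots> = (\<Sum>J'\<in>?C. (avg J' - avg J) * (\<integral>x. indicator J' x * (f x - f c) \<partial>\<nu>))"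
    using sum_avg_diff_vol_descendants[OF J, of 1] by simp
  also have "\<bar>\<dots>\<bar> \<le> (\<Sum>J'\<in>?C. \<bar>(avg J' - avg J) * (\<integral>x. indicator J' x * (f x - f c) \<partial>\<nu>)\<bar>)"
    by (rule sum_abs)
  also have "\<dots> \<le> (\<Sum>J'\<in>?C. \<bar>avg J' - avg J\<bar> * (L * (1/2)^m * vol J'))"
  proof (rule sum_mono)
    fix J' assume J': "J' \<in> ?C"
    have "\<bar>\<integral>x. indicator J' x * (f x - f c) \<partial>\<nu>\<bar> \<le> L * (1/2)^m * vol J'"
      using integral_oscillation_le[OF J c C(2)[OF J'], of "\<lambda>_. 1"]
        integrable_indicator_dyadic[OF C(1)[OF J']] by (simp add: vol_def)
    then show "\<bar>(avg J' - avg J) * (\<integral>x. indicator J' x * (f x - f c) \<partial>\<nu>)\<bar>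
        \<le> \<bar>avg J' - avg J\<bar> * (L * (1/2)^m * vol J')"
      by (simp add: abs_mult mult_left_mono)
  qed
  also have "\<dots> = L * (1/2)^m * avg_variation m J"
    by (simp add: avg_variation_def sum_distrib_left mult_ac)
  finally show ?thesis .
qed

lemma deviation_le_children:
  assumes J: "J \<in> D m"
  shows "\<bar>deviation f J\<bar> \<le> (\<Sum>J'\<in>descendants m 1 J. \<bar>deviation f J'\<bar>) + L * (1/2)^m * avg_variation m J"
  using deviation_children[OF J] abs_sum_avg_diff_integral_le[OF J] sum_abs[of "deviation f"]
  by (smt (verit))

lemma deviation_le:
  assumes "J \<in> D m"
  shows "\<bar>deviation f J\<bar>
    \<le> (\<Sum>j<N. L * (1/2)^(m + j) * avg_variation_sum m j J) + L * (1/2)^(m + N) * (2 * mass J)"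
  using assms
proof (induction N arbitrary: m J)
  case 0
  then show ?case using deviation_le_mass by simp
next
  case (Suc N)
  let ?C = "descendants m 1 J"
  have "\<bar>deviation f J\<bar> \<le> (\<Sum>I\<in>?C. \<bar>deviation f I\<bar>) + L * (1/2)^m * avg_variation m J"
    by (rule deviation_le_children[OF Suc.prems])
  also have "\<dots> \<le> (\<Sum>I\<in>?C. (\<Sum>j<N. L * (1/2)^(Suc m + j) * avg_variation_sum (Suc m) j I)
        + L * (1/2)^(Suc m + N) * (2 * mass I)) + L * (1/2)^m * avg_variation m J"
    using Suc.IH descendants_D by (intro add_right_mono sum_mono) fastforce
  also have "\<dots> = (\<Sum>j<N. L * (1/2)^(Suc m + j) * (\<Sum>I\<in>?C. avg_variation_sum (Suc m) j I))
      + L * (1/2)^(Suc m + N) * (2 * (\<Sum>I\<in>?C. mass I)) + L * (1/2)^m * avg_variation m J"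
    by (simp add: sum.distrib sum_distrib_left sum.swap[of _ "{..<N}"])
  also have "\<dots> = (\<Sum>j<N. L * (1/2)^(m + Suc j) * avg_variation_sum m (Suc j) J)
      + L * (1/2)^(m + Suc N) * (2 * mass J) + L * (1/2)^m * avg_variation_sum m 0 J"
    using avg_variation_sum_add[OF Suc.prems, of 1] mass_descendants[OF Suc.prems, of 1]
    by (simp add: avg_variation_sum_def descendants_0[OF Suc.prems])
  also have "\<dots> = (\<Sum>j<Suc N. L * (1/2)^(m + j) * avg_variation_sum m j J) + L * (1/2)^(m + Suc N) * (2 * mass J)"
    by (simp add: sum.lessThan_Suc_shift del: sum.lessThan_Suc)
  finally show ?case .
qed

end

section \<open>The Carleson sum\<close>

context dyadic_density
begin

lemma measure_density_g: assumes J: "J \<in> D k" shows "measure (density \<nu> g) J = mass J"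
proof -
  have "emeasure (density \<nu> g) J = (\<integral>\<^sup>+ x. ennreal (indicator J x * g x) \<partial>\<nu>)"
    using dyadic_sets[OF J] g_nonneg
    by (simp add: emeasure_density ennreal_indicator ennreal_mult' mult.commute split: split_indicator)
  also have "\<dots> = ennreal (mass J)"
    unfolding mass_def using integrable_indicator_g[OF J] g_nonneg
    by (intro nn_integral_eq_integral) (auto split: split_indicator)
  finally show ?thesis using mass_nonneg[of J] by (simp add: measure_def)
qed

text \<open>Testing \<open>W\<^sub>1\<close> against \<open>\<psi>\<close> on the blow-up of \<open>J\<close> is testing \<open>deviation\<close> against
  \<open>\<psi> \<circ> T_map J\<close>, a \<open>2^m\<close>-Lipschitz function.\<close>
lemma
  assumes J: "J \<in> D m" and vol: "vol J > 0" and mass: "mass J > 0"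
  shows alpha_nonneg: "0 \<le> alpha (density \<nu> g) \<nu> J"
    and alpha_mass_le: "alpha (density \<nu> g) \<nu> J * mass J
      \<le> (\<Sum>j<N. (1/2)^j * avg_variation_sum m j J) + (1/2)^N * (2 * mass J)" (is "_ \<le> ?b")
proof -
  obtain a where a: "J = {a..<a + (1/2)^m}" using dyadic_interval[OF J] by blast
  have T: "T_map J x = 2^m * (x - a)" for x
    unfolding T_map_def a by (simp add: power_one_over field_simps)
  have scale: "(2::real)^m * (1/2)^(m + j) = (1/2)^j" for j
    by (simp add: power_add power_one_over)
  have test: "\<bar>(\<integral>x. \<psi> x \<partial>blowup (density \<nu> g) J) - (\<integral>x. \<psi> x \<partial>blowup \<nu> J)\<bar> \<le> ?b / mass J"
    if "1-lipschitz_on UNIV \<psi>" "\<forall>x. x \<notin> {0..1} \<longrightarrow> \<psi> x = 0" for \<psi>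
  proof -
    note \<psi> = lipschitz_supported_on_unit[OF that]
    define f where "f x = \<psi> (T_map J x)" for x
    have "T_map J x - T_map J y = 2^m * (x - y)" for x y by (simp add: T algebra_simps)
    then have "\<bar>f x - f y\<bar> \<le> 2^m * \<bar>x - y\<bar>" for x y
      using \<psi>(1)[of "T_map J x" "T_map J y"] by (simp add: f_def abs_mult)
    moreover have "f \<in> borel_measurable borel" unfolding f_def using \<psi>(2) by measurable
    ultimately interpret dyadic_lipschitz_test D \<nu> g f "2^m" 2
      by unfold_locales (auto simp: f_def \<psi>(3))
    have "(\<integral>x. \<psi> x \<partial>blowup (density \<nu> g) J) = (\<integral>x. indicator J x * f x \<partial>density \<nu> g) / mass J"
      using integral_blowup[of "density \<nu> g" J \<psi>] \<psi>(2) dyadic_borel[OF J] mass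
      by (simp add: measure_density_g[OF J] f_def)
    also have "(\<integral>x. indicator J x * f x \<partial>density \<nu> g) = (\<integral>x. indicator J x * (f x * g x) \<partial>\<nu>)"
      using dyadic_sets[OF J] g_nonneg by (subst integral_density) (auto simp: mult_ac)
    finally have "(\<integral>x. \<psi> x \<partial>blowup (density \<nu> g) J) - (\<integral>x. \<psi> x \<partial>blowup \<nu> J) = deviation f J / mass J"
      using integral_blowup[of \<nu> J \<psi>] \<psi>(2) dyadic_borel[OF J] vol mass
      by (simp add: f_def vol_def deviation_def avg_def diff_divide_distrib)
    then show ?thesis
      using deviation_le[OF J, of N] mass by (simp add: scale divide_right_mono)
  qed
  show "0 \<le> alpha (density \<nu> g) \<nu> J"
    unfolding alpha_def by (rule W1_nonneg) (rule test)
  have "alpha (density \<nu> g) \<nu> J \<le> ?b / mass J"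
    unfolding alpha_def by (rule W1_le) (rule test)
  then show "alpha (density \<nu> g) \<nu> J * mass J \<le> ?b" using mass by (simp add: field_simps)
qed

definition alpha_term :: "real set \<Rightarrow> real" where
  "alpha_term J = (alpha (density \<nu> g) \<nu> J)^2 * (measure (density \<nu> g) J)^2 / measure \<nu> J"

lemma alpha_term_le:
  assumes J: "J \<in> D m" and vol: "vol J > 0"
  shows "alpha_term J \<le> 2 * (\<Sum>j<N. (1/2)^j * energy_gain_sum m j J) + 8 * (1/2)^N * avg_energy J"
    (is "_ \<le> ?c")
proof (cases "mass J = 0")
  case True
  then show ?thesis
    using energy_gain_sum_nonneg[OF J] avg_energy_nonneg[of J]
    by (simp add: alpha_term_def measure_density_g[OF J] sum_nonneg)
next
  case False
  then have mass: "mass J > 0" using mass_nonneg[of J] by simp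
  let ?\<alpha> = "alpha (density \<nu> g) \<nu> J"
  have "alpha_term J * vol J = (?\<alpha> * mass J)^2"
    using vol by (simp add: alpha_term_def measure_density_g[OF J] vol_def power_mult_distrib)
  also have "\<dots> \<le> ((\<Sum>j<N. (1/2)^j * avg_variation_sum m j J) + (1/2)^N * (2 * mass J))^2"
    using alpha_mass_le[OF J vol mass] alpha_nonneg[OF J vol mass] mass by (intro power_mono) auto
  also have "\<dots> \<le> 2 * ((\<Sum>j<N. (1/2)^j * (avg_variation_sum m j J)^2) + (1/2)^N * (2 * mass J)^2)"
    by (rule geometric_cauchy_schwarz)
  also have "\<dots> \<le> 2 * ((\<Sum>j<N. (1/2)^j * (vol J * energy_gain_sum m j J)) + (1/2)^N * (2 * mass J)^2)"
    using avg_variation_sum_square_le[OF J] by (intro mult_left_mono add_right_mono sum_mono) auto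
  also have "\<dots> = ?c * vol J"
    using vol by (simp add: avg_energy_def sum_distrib_left sum_distrib_right field_simps power2_eq_square)
  finally show ?thesis using vol by simp
qed

lemma sum_energy_le:
  assumes S: "finite S" "S \<subseteq> D k" shows "(\<Sum>J\<in>S. energy J) \<le> (\<integral>x. (g x)^2 \<partial>\<nu>)"
proof -
  have "disjoint S" using dyadic_disjoint S(2) unfolding disjoint_def by blast
  moreover have sets: "S \<subseteq> sets \<nu>" using S(2) dyadic_sets by blast
  moreover have int: "integrable \<nu> (\<lambda>x. indicator (\<Union>S) x * (g x)^2)"
  proof -
    have "\<Union>S \<in> sets \<nu>" using sets S(1) by (intro sets.finite_Union) auto
    from integrable_mult_indicator[OF this g_square_integrable] show ?thesis by simp
  qed
  ultimately have "(\<Sum>J\<in>S. energy J) = (\<integral>x. indicator (\<Union>S) x * (g x)^2 \<partial>\<nu>)"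
    unfolding energy_def using integral_indicator_disjoint_Union[OF S(1)] by simp
  also have "\<dots> \<le> (\<integral>x. (g x)^2 \<partial>\<nu>)"
    by (rule integral_mono[OF int g_square_integrable]) (simp split: split_indicator)
  finally show ?thesis .
qed

lemma sum_energy_gain_sum_le_energy_root:
  assumes J: "J \<in> D 0" and G: "finite G" "\<And>I. I \<in> G \<Longrightarrow> I \<in> descendants 0 (level I) J"
  shows "(\<Sum>I\<in>G. energy_gain_sum (level I) j I) \<le> energy J"
proof -
  obtain K where K: "level ` G \<subseteq> {..<K}" using finite_nat_bounded G(1) by blast
  let ?P = "SIGMA k:{..<K}. descendants 0 k J"
  have "(\<Sum>I\<in>G. energy_gain_sum (level I) j I) = (\<Sum>(k, I)\<in>(\<lambda>I. (level I, I)) ` G. energy_gain_sum k j I)"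
    by (simp add: sum.reindex inj_on_def)
  also have "\<dots> \<le> (\<Sum>(k, I)\<in>?P. energy_gain_sum k j I)"
  proof (rule sum_mono2)
    show "finite ?P" using finite_descendants[OF J] by auto
    show "(\<lambda>I. (level I, I)) ` G \<subseteq> ?P" using G(2) K by auto
  qed (auto intro!: energy_gain_sum_nonneg simp: descendants_def)
  also have "\<dots> = (\<Sum>k<K. \<Sum>I\<in>descendants 0 k J. energy_gain_sum k j I)"
    using finite_descendants[OF J] by (simp add: sum.Sigma)
  also have "\<dots> = (\<Sum>k<K. energy_gain_sum 0 (k + j) J)"
    using energy_gain_sum_add[OF J] by simp
  also have "\<dots> = (\<Sum>n\<in>(\<lambda>k. k + j) ` {..<K}. energy_gain_sum 0 n J)"
    by (simp add: sum.reindex)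
  also have "\<dots> \<le> (\<Sum>n<K + j. energy_gain_sum 0 n J)"
    by (rule sum_mono2) (auto intro: energy_gain_sum_nonneg[OF J])
  also have "\<dots> \<le> energy J" by (rule sum_energy_gain_sum_le_energy[OF J])
  finally show ?thesis .
qed

lemma sum_energy_gain_sum_le:
  assumes F: "finite F" "F \<subseteq> (\<Union>k. D k)"
  shows "(\<Sum>I\<in>F. energy_gain_sum (level I) j I) \<le> (\<integral>x. (g x)^2 \<partial>\<nu>)"
proof -
  have F_level: "I \<in> D (level I)" if "I \<in> F" for I using F(2) that D_level by blast
  have "(\<Sum>I\<in>F. energy_gain_sum (level I) j I)
      = (\<Sum>J\<in>root ` F. \<Sum>I\<in>{I \<in> F. root I = J}. energy_gain_sum (level I) j I)"
    by (rule sum.image_gen[OF F(1)])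
  also have "\<dots> \<le> (\<Sum>J\<in>root ` F. energy J)"
  proof (rule sum_mono)
    fix J assume J: "J \<in> root ` F"
    show "(\<Sum>I\<in>{I \<in> F. root I = J}. energy_gain_sum (level I) j I) \<le> energy J"
    proof (rule sum_energy_gain_sum_le_energy_root)
      show "J \<in> D 0" using J F_level root_D by blast
      show "I \<in> descendants 0 (level I) J" if "I \<in> {I \<in> F. root I = J}" for I
        using that mem_descendants_root[OF F_level] by auto
    qed (use F(1) in simp)
  qed
  also have "\<dots> \<le> (\<integral>x. (g x)^2 \<partial>\<nu>)"
    using F(1) F_level root_D by (intro sum_energy_le) auto
  finally show ?thesis .
qed

lemma sum_alpha_term_le_tail:
  assumes F: "finite F" "F \<subseteq> {I. (\<exists>k. I \<in> D k) \<and> vol I > 0}"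
  shows "(\<Sum>I\<in>F. alpha_term I) \<le> 4 * (\<integral>x. (g x)^2 \<partial>\<nu>) + 8 * (1/2)^N * (\<Sum>I\<in>F. avg_energy I)"
proof -
  let ?G = "\<integral>x. (g x)^2 \<partial>\<nu>"
  have "(\<Sum>I\<in>F. alpha_term I)
      \<le> (\<Sum>I\<in>F. 2 * (\<Sum>j<N. (1/2)^j * energy_gain_sum (level I) j I) + 8 * (1/2)^N * avg_energy I)"
    using F(2) by (intro sum_mono alpha_term_le) (auto intro: D_level)
  also have "\<dots> = 2 * (\<Sum>j<N. (1/2)^j * (\<Sum>I\<in>F. energy_gain_sum (level I) j I))
      + 8 * (1/2)^N * (\<Sum>I\<in>F. avg_energy I)"
    by (simp add: sum.distrib sum_distrib_left sum.swap[of _ F])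
  also have "\<dots> \<le> 2 * (\<Sum>j<N. (1/2)^j * ?G) + 8 * (1/2)^N * (\<Sum>I\<in>F. avg_energy I)"
  proof -
    have "F \<subseteq> (\<Union>k. D k)" using F(2) by auto
    from sum_energy_gain_sum_le[OF F(1) this] show ?thesis
      by (intro add_right_mono mult_left_mono sum_mono) auto
  qed
  also have "(\<Sum>j<N. (1/2::real)^j * ?G) = (2 - 2 * (1/2)^N) * ?G"
    unfolding sum_distrib_right[symmetric] by (induction N) (auto simp: field_simps)
  also have "2 * ((2 - 2 * (1/2)^N) * ?G) \<le> 4 * ?G"
    using integral_nonneg_AE[of "\<lambda>x. (g x)^2" \<nu>] by (simp add: algebra_simps)
  finally show ?thesis by linarith
qed

lemma sum_alpha_term_le:
  assumes "finite F" "F \<subseteq> {I. (\<exists>k. I \<in> D k) \<and> vol I > 0}"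
  shows "(\<Sum>I\<in>F. alpha_term I) \<le> 4 * (\<integral>x. (g x)^2 \<partial>\<nu>)"
proof (rule LIMSEQ_le_const)
  show "(\<lambda>N. 4 * (\<integral>x. (g x)^2 \<partial>\<nu>) + 8 * (1/2)^N * (\<Sum>I\<in>F. avg_energy I))
      \<longlonglongrightarrow> 4 * (\<integral>x. (g x)^2 \<partial>\<nu>)"
  proof -
    have "(\<lambda>N. (1/2::real)^N) \<longlonglongrightarrow> 0" by (rule LIMSEQ_power_zero) simp
    then have "(\<lambda>N. 4 * (\<integral>x. (g x)^2 \<partial>\<nu>) + 8 * (1/2)^N * (\<Sum>I\<in>F. avg_energy I))
        \<longlonglongrightarrow> 4 * (\<integral>x. (g x)^2 \<partial>\<nu>) + 8 * 0 * (\<Sum>I\<in>F. avg_energy I)"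
      by (intro tendsto_intros) auto
    then show ?thesis by simp
  qed
qed (use sum_alpha_term_le_tail[OF assms] in auto)

lemma carleson_sum_le:
  "(\<Sum>\<^sub>\<infinity> I \<in> {I. (\<exists>k. I \<in> D k) \<and> measure \<nu> I > 0}.
      ennreal ((alpha (density \<nu> g) \<nu> I)\<^sup>2 * (measure (density \<nu> g) I)\<^sup>2 / measure \<nu> I))
    \<le> ennreal (4 * (\<integral>x. (g x)\<^sup>2 \<partial>\<nu>))"
  unfolding alpha_term_def[symmetric]
proof (rule infsum_le_finite_sums)
  fix F assume F: "finite F" "F \<subseteq> {I. (\<exists>k. I \<in> D k) \<and> measure \<nu> I > 0}"
  have "(\<Sum>I\<in>F. ennreal (alpha_term I)) = ennreal (\<Sum>I\<in>F. alpha_term I)"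
    by (rule sum_ennreal) (simp add: alpha_term_def)
  also have "\<dots> \<le> ennreal (4 * (\<integral>x. (g x)\<^sup>2 \<partial>\<nu>))"
    using sum_alpha_term_le[OF F(1)] F(2) by (intro ennreal_leI) (simp add: vol_def)
  finally show "(\<Sum>I\<in>F. ennreal (alpha_term I)) \<le> ennreal (4 * (\<integral>x. (g x)\<^sup>2 \<partial>\<nu>))" .
qed (rule nonneg_summable_on_complete, simp)

end

theorem mainTheorem11:
  "\<exists>C::real. \<forall>(D::nat \<Rightarrow> real set set) (\<nu>::real measure) (g::real \<Rightarrow> real).
     gen_dyadic_system D \<longrightarrow> radon_measure \<nu> \<longrightarrow> dyadically_doubling D \<nu> \<longrightarrow>
     g \<in> borel_measurable borel \<longrightarrow> (\<forall>x. g x \<ge> 0) \<longrightarrow> integrable \<nu> (\<lambda>x. (g x)\<^sup>2) \<longrightarrow>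
     (\<Sum>\<^sub>\<infinity> I \<in> {I. (\<exists>k. I \<in> D k) \<and> measure \<nu> I > 0}.
        ennreal ((alpha (density \<nu> g) \<nu> I)\<^sup>2 * (measure (density \<nu> g) I)\<^sup>2 / measure \<nu> I))
     \<le> ennreal (C * (\<integral>x. (g x)\<^sup>2 \<partial>\<nu>))"
  by (intro exI[of _ 4] allI impI dyadic_density.carleson_sum_le)
    (simp_all add: dyadic_density_def dyadic_density_axioms_def dyadic_system_def)

end
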